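(* Let $n\ge1$, let $v=(v_1,\ldots,v_n)\in\mathbb{R}^n$ and $\lambda=(\lambda_1,\ldots,\lambda_n)\in\mathbb{R}^n$ satisfy $\lambda(v):=\sum_{i=1}^n\lambda_iv_i>0$, and put $\|\lambda\|_\infty=\max_i|\lambda_i|$, $\|v\|_\infty=\max_i|v_i|$. Let $H\subseteq Q_n$ be any set of more than $2^{n-1}$ vertices. Then there exists $\beta\in H$ such that \[ \sqrt{\lambda(v)}\ \le\ \|\lambda\|_\infty\cdot\#\{\gamma\in H:\gamma\to\beta\}+\|v\|_\infty\cdot\#\{\gamma\in H:\beta\to\gamma\}. \]
   Context: $Q_n=\{0,1\}^n$ is the boolean cube, viewed as a graph in which two vertices are adjacent iff they differ in exactly one coordinate. For $\gamma,\beta\in Q_n$ write $\gamma\to\beta$ if $\gamma$ and $\beta$ differ in exactly one coordinate $k$ and $\gamma_k=0$, $\beta_k=1$ (i.e. $\beta$ is obtained from $\gamma$ by changing a single $0$ to $1$). *)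

theory Defs
  imports Complex_Main
begin

definition cube :: "nat \<Rightarrow> bool list set" where
  "cube n = {xs. length xs = n}"

text \<open>gamma -> beta: beta arises from gamma by changing a single 0 (False) to 1 (True).\<close>
definition up_edge :: "bool list \<Rightarrow> bool list \<Rightarrow> bool" where
  "up_edge g b \<longleftrightarrow> length g = length b \<and>
     (\<exists>k < length g. \<not> g ! k \<and> b ! k \<and> (\<forall>j < length g. j \<noteq> k \<longrightarrow> g ! j = b ! j))"

definition sup_norm :: "nat \<Rightarrow> (nat \<Rightarrow> real) \<Rightarrow> real" where
  "sup_norm n x = Max ((\<lambda>i. \<bar>x i\<bar>) ` {..<n})"

end

theory Submission
  imports Defs
begin

text \<open>A weighted version of Huang's sensitivity argument. Let \<open>M\<close> be the signed adjacency
  operator of \<open>Q\<^sub>n\<close> in which the edge of direction \<open>k\<close> is weighted by \<open>\<lambda>\<^sub>k\<close> from its upper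
  end and by \<open>v\<^sub>k\<close> from its lower end. With Huang's signs the two 2-paths through a square
  cancel, so \<open>M\<^sup>2 = \<lambda>(v) I\<close> and \<open>M + t\<close>, \<open>t = \<surd>\<lambda>(v)\<close>, maps every function into the
  \<open>t\<close>-eigenspace of \<open>M\<close>. Applied to functions supported on a half-cube \<open>{x\<^sub>j = 0}\<close>
  with \<open>\<lambda>\<^sub>j \<noteq> 0\<close>, which form a space of dimension \<open>2\<^sup>n\<^sup>-\<^sup>1 > |Q\<^sub>n - H|\<close>, this yields a nonzero
  eigenvector vanishing outside \<open>H\<close>. At a vertex of \<open>H\<close> where it has maximal modulus the
  eigenvalue equation gives the claimed bound.\<close>

lemma homogeneous_system_nontrivial_solution:
  fixes a :: "'c \<Rightarrow> 'u \<Rightarrow> real"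
  assumes "finite C" "finite U" "card C < card U"
  shows "\<exists>y. (\<exists>u\<in>U. y u \<noteq> 0) \<and> (\<forall>c\<in>C. (\<Sum>u\<in>U. a c u * y u) = 0)"
  using assms
proof (induction C arbitrary: U a rule: finite_induct)
  case empty
  then obtain u where "u \<in> U" by fastforce
  then show ?case by (rule_tac x="\<lambda>x. if x = u then 1 else 0" in exI) auto
next
  case (insert c C)
  show ?case
  proof (cases "\<forall>u\<in>U. a c u = 0")
    case True
    have "card C < card U" using insert by simp
    with insert.IH obtain y where "\<exists>u\<in>U. y u \<noteq> 0" "\<forall>d\<in>C. (\<Sum>u\<in>U. a d u * y u) = 0"
      using insert.prems by blast
    with True show ?thesis by auto
  next
    case False
    then obtain u0 where u0: "u0 \<in> U" "a c u0 \<noteq> 0" by auto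
    \<comment> \<open>Gaussian elimination of the unknown \<open>u0\<close> by the equation \<open>c\<close>\<close>
    define U' where "U' = U - {u0}"
    define a' where "a' d u = a d u - a d u0 * a c u / a c u0" for d u
    have "finite U'" "card C < card U'"
      using u0 insert by (auto simp: U'_def)
    with insert.IH obtain y' where
      y': "\<exists>u\<in>U'. y' u \<noteq> 0" "\<forall>d\<in>C. (\<Sum>u\<in>U'. a' d u * y' u) = 0"
      by blast
    define S where "S = (\<Sum>u\<in>U'. a c u * y' u)"
    define y where "y = y'(u0 := - S / a c u0)"
    have split: "(\<Sum>u\<in>U. a d u * y u) = (\<Sum>u\<in>U'. a d u * y' u) - a d u0 / a c u0 * S" for d
    proof -
      have "(\<Sum>u\<in>U. a d u * y u) = a d u0 * y u0 + (\<Sum>u\<in>U'. a d u * y u)"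
        using u0 insert.prems by (simp add: U'_def sum.remove)
      also have "(\<Sum>u\<in>U'. a d u * y u) = (\<Sum>u\<in>U'. a d u * y' u)"
        by (rule sum.cong) (auto simp: y_def U'_def)
      finally show ?thesis by (simp add: y_def)
    qed
    have "(\<Sum>u\<in>U. a d u * y u) = 0" if "d \<in> insert c C" for d
    proof (cases "d = c")
      case True
      then show ?thesis using split[of c] u0 by (simp add: S_def)
    next
      case False
      then have "(\<Sum>u\<in>U'. a' d u * y' u) = 0" using y' that by auto
      moreover have "(\<Sum>u\<in>U'. a' d u * y' u) = (\<Sum>u\<in>U'. a d u * y' u) - a d u0 / a c u0 * S"
        unfolding a'_def S_def by (simp add: algebra_simps sum_subtractf sum_distrib_left)
      ultimately show ?thesis by (simp add: split)
    qed
    moreover have "\<exists>u\<in>U. y u \<noteq> 0" using y' by (auto simp: y_def U'_def)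
    ultimately show ?thesis by blast
  qed
qed

lemma finite_cube: "finite (cube n)"
  using finite_lists_length_eq[of "UNIV :: bool set" n] by (simp add: cube_def)

lemma card_cube: "card (cube n) = 2 ^ n"
  using card_lists_length_eq[of "UNIV :: bool set" n] by (simp add: cube_def)

definition flip :: "bool list \<Rightarrow> nat \<Rightarrow> bool list" where
  "flip b k = b[k := \<not> b ! k]"

lemma length_flip [simp]: "length (flip b k) = length b"
  by (simp add: flip_def)

lemma flip_in_cube_iff [simp]: "flip b k \<in> cube n \<longleftrightarrow> b \<in> cube n"
  by (simp add: cube_def)

lemma nth_flip: "k < length b \<Longrightarrow> flip b k ! j = (if j = k then \<not> b ! k else b ! j)"
  by (simp add: flip_def nth_list_update)

lemma nth_flip_other [simp]: "j \<noteq> k \<Longrightarrow> flip b k ! j = b ! j"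
  by (simp add: flip_def)

lemma nth_flip_same [simp]: "k < length b \<Longrightarrow> flip b k ! k = (\<not> b ! k)"
  by (simp add: flip_def)

lemma flip_flip [simp]: "k < length b \<Longrightarrow> flip (flip b k) k = b"
  by (rule nth_equalityI) (auto simp: nth_flip)

lemma flip_commute: "k < length b \<Longrightarrow> l < length b \<Longrightarrow> flip (flip b k) l = flip (flip b l) k"
  by (rule nth_equalityI) (auto simp: nth_flip)

lemma inj_on_flip: "inj_on (flip b) {..<length b}"
proof (rule inj_onI, rule ccontr)
  fix k l assume "k \<in> {..<length b}" "k \<noteq> l" and eq: "flip b k = flip b l"
  from \<open>k \<in> {..<length b}\<close> \<open>k \<noteq> l\<close> have "flip b k ! k \<noteq> flip b l ! k" by simp
  with eq show False by argo
qed

lemma card_cube_nth_False: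
  assumes "j < n"
  shows "card {x\<in>cube n. \<not> x ! j} = 2 ^ (n - 1)"
proof -
  let ?F = "{x\<in>cube n. \<not> x ! j}" and ?T = "{x\<in>cube n. x ! j}"
  have "bij_betw (\<lambda>x. flip x j) ?F ?T"
    using assms by (intro bij_betw_byWitness[where f' = "\<lambda>x. flip x j"]) (auto simp: cube_def)
  then have "card ?F = card ?T" by (rule bij_betw_same_card)
  moreover have "card ?F + card ?T = card (cube n)"
    using finite_cube by (subst card_Un_disjoint[symmetric]) (auto intro: arg_cong[where f = card])
  moreover have "(2::nat) ^ n = 2 * 2 ^ (n - 1)"
    using assms by (cases n) auto
  ultimately show ?thesis by (simp add: card_cube)
qed

lemma eq_flip_if_differ_only_at:
  assumes "length g = length b" "k < length b" "g ! k \<noteq> b ! k"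
    and "\<forall>j<length b. j \<noteq> k \<longrightarrow> g ! j = b ! j"
  shows "g = flip b k"
  using assms by (intro nth_equalityI) (auto simp: nth_flip)

lemma up_edge_iff_flip: "up_edge g b \<longleftrightarrow> (\<exists>k<length b. b ! k \<and> g = flip b k)"
proof
  assume "up_edge g b"
  then obtain k where "length g = length b" "k < length b" "\<not> g ! k" "b ! k"
    "\<forall>j<length b. j \<noteq> k \<longrightarrow> g ! j = b ! j"
    by (auto simp: up_edge_def)
  then show "\<exists>k<length b. b ! k \<and> g = flip b k"
    using eq_flip_if_differ_only_at by blast
qed (auto simp: up_edge_def nth_flip)

lemma up_edge_from_iff_flip: "up_edge b g \<longleftrightarrow> (\<exists>k<length b. \<not> b ! k \<and> g = flip b k)"
proof
  assume "up_edge b g"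
  then obtain k where "length g = length b" "k < length b" "\<not> b ! k" "g ! k"
    "\<forall>j<length b. j \<noteq> k \<longrightarrow> g ! j = b ! j"
    by (auto simp: up_edge_def)
  then show "\<exists>k<length b. \<not> b ! k \<and> g = flip b k"
    using eq_flip_if_differ_only_at by blast
qed (auto simp: up_edge_def nth_flip)

lemma card_flip_neighbours:
  "card {g\<in>H. \<exists>k<length b. P k \<and> g = flip b k} = card {k. k < length b \<and> P k \<and> flip b k \<in> H}"
proof -
  have "{g\<in>H. \<exists>k<length b. P k \<and> g = flip b k} = flip b ` {k. k < length b \<and> P k \<and> flip b k \<in> H}"
    by auto
  moreover have "inj_on (flip b) {k. k < length b \<and> P k \<and> flip b k \<in> H}"
    by (rule inj_on_subset[OF inj_on_flip]) auto
  ultimately show ?thesis by (simp add: card_image)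
qed

lemma card_up_neighbours:
  "card {g\<in>H. up_edge g b} = card {k. k < length b \<and> b ! k \<and> flip b k \<in> H}"
  using card_flip_neighbours[of H b "\<lambda>k. b ! k"] by (simp add: up_edge_iff_flip)

lemma card_down_neighbours:
  "card {g\<in>H. up_edge b g} = card {k. k < length b \<and> \<not> b ! k \<and> flip b k \<in> H}"
  using card_flip_neighbours[of H b "\<lambda>k. \<not> b ! k"] by (simp add: up_edge_from_iff_flip)

definition edge_sign :: "bool list \<Rightarrow> nat \<Rightarrow> real" where
  "edge_sign b k = (-1) ^ card {j. j < k \<and> b ! j}"

definition edge_weight :: "(nat \<Rightarrow> real) \<Rightarrow> (nat \<Rightarrow> real) \<Rightarrow> bool list \<Rightarrow> nat \<Rightarrow> real" where
  "edge_weight lam v b k = edge_sign b k * (if b ! k then lam k else v k)"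

definition signed_op :: "nat \<Rightarrow> (nat \<Rightarrow> real) \<Rightarrow> (nat \<Rightarrow> real) \<Rightarrow> (bool list \<Rightarrow> real) \<Rightarrow> bool list \<Rightarrow> real"
  where "signed_op n lam v x b = (\<Sum>k<n. edge_weight lam v b k * x (flip b k))"

lemma edge_sign_squared: "edge_sign b k * edge_sign b k = 1"
  by (simp add: edge_sign_def flip: power_mult_distrib)

lemma edge_sign_flip_above: "k \<le> l \<Longrightarrow> edge_sign (flip b l) k = edge_sign b k"
  unfolding edge_sign_def by (rule arg_cong[where f = "\<lambda>A. (-1) ^ card A"]) auto

lemma edge_sign_flip_below:
  assumes "k < l" "k < length b"
  shows "edge_sign (flip b k) l = - edge_sign b l"
proof -
  define S where "S = {j. j < l \<and> b ! j}"
  define S' where "S' = {j. j < l \<and> flip b k ! j}"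
  have "S = insert k S' \<and> k \<notin> S' \<or> S' = insert k S \<and> k \<notin> S"
    using assms by (cases "b ! k") (auto simp: S_def S'_def nth_flip)
  moreover have "finite S" "finite S'" by (simp_all add: S_def S'_def)
  ultimately show ?thesis
    by (auto simp: edge_sign_def S_def[symmetric] S'_def[symmetric])
qed

lemma abs_le_sup_norm: "k < n \<Longrightarrow> \<bar>x k\<bar> \<le> sup_norm n x"
  unfolding sup_norm_def by (rule Max_ge) auto

lemma edge_weight_abs_le:
  "k < n \<Longrightarrow> \<bar>edge_weight lam v b k\<bar> \<le> (if b ! k then sup_norm n lam else sup_norm n v)"
  by (simp add: edge_weight_def edge_sign_def abs_mult abs_le_sup_norm)

lemma edge_weight_nonzero: "b ! k \<Longrightarrow> lam k \<noteq> 0 \<Longrightarrow> edge_weight lam v b k \<noteq> 0"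
  by (simp add: edge_weight_def edge_sign_def)

lemma sum_skew_symmetric_eq_0:
  fixes g :: "'a \<Rightarrow> 'a \<Rightarrow> 'b :: linordered_ab_group_add"
  assumes "\<And>k l. k \<in> A \<Longrightarrow> l \<in> A \<Longrightarrow> g k l = - g l k"
  shows "(\<Sum>k\<in>A. \<Sum>l\<in>A. g k l) = 0"
proof -
  have "(\<Sum>k\<in>A. \<Sum>l\<in>A. g k l) = (\<Sum>l\<in>A. \<Sum>k\<in>A. - g l k)"
    by (subst sum.swap) (intro sum.cong refl assms)
  then show ?thesis by (simp add: sum_negf)
qed

lemma signed_op_squared:
  assumes "length b = n"
  shows "signed_op n lam v (signed_op n lam v x) b = (\<Sum>i<n. lam i * v i) * x b"
proof -
  define f where "f k l = edge_weight lam v b k * edge_weight lam v (flip b k) l * x (flip (flip b k) l)"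
    for k l
  define g where "g k l = (if k = l then 0 else f k l)" for k l
  have unfold: "signed_op n lam v (signed_op n lam v x) b = (\<Sum>k<n. \<Sum>l<n. f k l)"
    by (simp add: signed_op_def f_def sum_distrib_left mult.assoc)
  have diagonal: "f k k = lam k * v k * x b" if "k < n" for k
    using that assms edge_sign_squared[of b k] edge_sign_flip_above[of k k b]
    by (cases "b ! k") (simp_all add: f_def edge_weight_def algebra_simps)
  \<comment> \<open>The two paths from \<open>b\<close> that flip directions \<open>k\<close> and \<open>l\<close> in either order get opposite signs.\<close>
  have skew: "f k l = - f l k" if "k < l" "l < n" for k l
    using that assms
    by (simp add: f_def edge_weight_def flip_commute edge_sign_flip_below edge_sign_flip_above)
  have skew_sum: "(\<Sum>k<n. \<Sum>l<n. g k l) = 0"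
  proof (rule sum_skew_symmetric_eq_0)
    fix k l assume "k \<in> {..<n}" "l \<in> {..<n}"
    then show "g k l = - g l k"
      by (cases k l rule: linorder_cases) (simp_all add: g_def skew)
  qed
  have row: "(\<Sum>l<n. f k l) = f k k + (\<Sum>l<n. g k l)" if "k < n" for k
  proof -
    have "(\<Sum>l<n. f k l) = (\<Sum>l<n. (if l = k then f k k else 0) + g k l)"
      by (rule sum.cong) (simp_all add: g_def)
    with that show ?thesis by (simp add: sum.distrib)
  qed
  have "(\<Sum>k<n. \<Sum>l<n. f k l) = (\<Sum>k<n. f k k) + (\<Sum>k<n. \<Sum>l<n. g k l)"
    by (simp add: row sum.distrib)
  also have "\<dots> = (\<Sum>k<n. lam k * v k) * x b"
    by (simp add: skew_sum diagonal sum_distrib_right)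
  finally show ?thesis by (simp add: unfold)
qed

lemma signed_op_add_scaled:
  "signed_op n lam v (\<lambda>x. f x + t * g x) b = signed_op n lam v f b + t * signed_op n lam v g b"
  unfolding signed_op_def by (simp add: algebra_simps sum.distrib sum_distrib_left)

lemma signed_op_sum:
  "signed_op n lam v (\<lambda>x. \<Sum>u\<in>U. c u * f u x) b = (\<Sum>u\<in>U. c u * signed_op n lam v (f u) b)"
  unfolding signed_op_def by (simp add: sum_distrib_left sum.swap[of _ U] algebra_simps)

lemma signed_op_eigenvector:
  assumes "length b = n" "t * t = (\<Sum>i<n. lam i * v i)"
  shows "signed_op n lam v (\<lambda>x. signed_op n lam v y x + t * y x) b
           = t * (signed_op n lam v y b + t * y b)"
proof -
  have "signed_op n lam v (\<lambda>x. signed_op n lam v y x + t * y x) b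
          = signed_op n lam v (signed_op n lam v y) b + t * signed_op n lam v y b"
    by (rule signed_op_add_scaled)
  with assms show ?thesis by (simp add: signed_op_squared algebra_simps)
qed

lemma signed_op_single_neighbour:
  assumes "j < n" "b ! j" "\<And>x. x ! j \<Longrightarrow> y x = 0"
  shows "signed_op n lam v y b = edge_weight lam v b j * y (flip b j)"
proof -
  have other: "y (flip b k) = 0" if "k \<noteq> j" for k
    using that assms(2,3) by simp
  have "signed_op n lam v y b = (\<Sum>k<n. if k = j then edge_weight lam v b j * y (flip b j) else 0)"
    unfolding signed_op_def by (rule sum.cong) (simp_all add: other)
  with assms(1) show ?thesis by simp
qed

lemma exists_signed_op_eigenvector_supported_on:
  assumes "j < n" "lam j \<noteq> 0" "t * t = (\<Sum>i<n. lam i * v i)"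
    and "H \<subseteq> cube n" "card H > 2 ^ (n - 1)"
  shows "\<exists>z. (\<forall>b\<in>cube n. signed_op n lam v z b = t * z b) \<and> (\<forall>b\<in>cube n - H. z b = 0)
             \<and> (\<exists>b\<in>H. z b \<noteq> 0)"
proof -
  define B where "B = {x\<in>cube n. \<not> x ! j}"
  define e where "e u x = (if x = u then 1 else 0 :: real)" for u x :: "bool list"
  define a where "a b u = signed_op n lam v (e u) b + t * e u b" for b u
  have "finite B" by (simp add: B_def finite_cube)
  have "card (cube n - H) = 2 ^ n - card H"
    using assms(4) finite_cube by (simp add: card_Diff_subset finite_subset card_cube)
  moreover have "card H \<le> 2 ^ n"
    using card_mono[OF finite_cube assms(4)] by (simp add: card_cube)
  moreover have "card B = 2 ^ (n - 1)"
    unfolding B_def using assms(1) by (rule card_cube_nth_False)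
  moreover have "(2::nat) ^ n = 2 * 2 ^ (n - 1)"
    using assms(1) by (cases n) auto
  ultimately have "card (cube n - H) < card B"
    using assms(5) by linarith
  moreover have "finite (cube n - H)" using finite_cube by simp
  \<comment> \<open>More unknowns (values on \<open>B\<close>) than equations (points outside \<open>H\<close>).\<close>
  ultimately obtain y where y: "\<exists>u\<in>B. y u \<noteq> 0" "\<forall>b\<in>cube n - H. (\<Sum>u\<in>B. a b u * y u) = 0"
    using homogeneous_system_nontrivial_solution[of "cube n - H" B a] \<open>finite B\<close> by auto
  define y0 where "y0 x = (\<Sum>u\<in>B. y u * e u x)" for x
  have y0_eq: "y0 x = (if x \<in> B then y x else 0)" for x
    using \<open>finite B\<close> by (simp add: y0_def e_def if_distrib[of "\<lambda>r. y _ * r"] cong: if_cong)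
  define z where "z x = signed_op n lam v y0 x + t * y0 x" for x
  have z_sum: "z b = (\<Sum>u\<in>B. a b u * y u)" for b
    unfolding z_def y0_def a_def
    by (simp add: signed_op_sum sum_distrib_left sum.distrib algebra_simps)
  have eigen: "\<forall>b\<in>cube n. signed_op n lam v z b = t * z b"
    using assms(3) by (simp add: z_def[abs_def] cube_def signed_op_eigenvector)
  have support: "\<forall>b\<in>cube n - H. z b = 0"
    using y(2) by (simp add: z_sum)
  obtain u where "u \<in> B" "y u \<noteq> 0" using y(1) by blast
  then have u: "length u = n" "\<not> u ! j" by (simp_all add: B_def cube_def)
  define b1 where "b1 = flip u j"
  have b1: "b1 \<in> cube n" "b1 ! j" "flip b1 j = u"
    using u assms(1) by (simp_all add: b1_def cube_def)
  have "signed_op n lam v y0 b1 = edge_weight lam v b1 j * y0 (flip b1 j)"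
    using assms(1) b1(2) by (rule signed_op_single_neighbour) (simp add: y0_eq B_def)
  then have "z b1 = edge_weight lam v b1 j * y u"
    using b1 \<open>u \<in> B\<close> by (simp add: z_def y0_eq B_def)
  then have "z b1 \<noteq> 0"
    using edge_weight_nonzero[where b = b1 and k = j and v = v] b1(2) assms(2) \<open>y u \<noteq> 0\<close>
    by simp
  with support b1(1) have "b1 \<in> H \<and> z b1 \<noteq> 0" by blast
  with eigen support show ?thesis by blast
qed

lemma eigenvector_degree_bound:
  assumes "H \<subseteq> cube n" "t > 0"
    and eigen: "\<forall>b\<in>cube n. signed_op n lam v z b = t * z b"
    and support: "\<forall>b\<in>cube n - H. z b = 0"
    and nonzero: "\<exists>b\<in>H. z b \<noteq> 0"
  shows "\<exists>\<beta>\<in>H. t \<le> sup_norm n lam * real (card {\<gamma>\<in>H. up_edge \<gamma> \<beta>})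
                    + sup_norm n v * real (card {\<gamma>\<in>H. up_edge \<beta> \<gamma>})"
proof -
  have "finite H" using assms(1) finite_cube by (rule finite_subset)
  define m where "m = Max ((\<lambda>x. \<bar>z x\<bar>) ` H)"
  have le_m: "\<bar>z \<gamma>\<bar> \<le> m" if "\<gamma> \<in> H" for \<gamma>
    unfolding m_def using \<open>finite H\<close> that by (intro Max_ge) auto
  obtain \<beta> where "\<beta> \<in> H" "\<bar>z \<beta>\<bar> = m"
    using Max_in[of "(\<lambda>x. \<bar>z x\<bar>) ` H"] \<open>finite H\<close> nonzero unfolding m_def by fastforce
  have "m > 0" using nonzero le_m by fastforce
  have "\<beta> \<in> cube n" using \<open>\<beta> \<in> H\<close> assms(1) by blast
  then have len: "length \<beta> = n" by (simp add: cube_def)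
  define L where "L = sup_norm n lam"
  define V where "V = sup_norm n v"
  define U where "U = {k. k < n \<and> \<beta> ! k \<and> flip \<beta> k \<in> H}"
  define D where "D = {k. k < n \<and> \<not> \<beta> ! k \<and> flip \<beta> k \<in> H}"
  have term_le: "\<bar>edge_weight lam v \<beta> k * z (flip \<beta> k)\<bar> \<le> m * (L * of_bool (k \<in> U) + V * of_bool (k \<in> D))"
    if "k < n" for k
  proof (cases "flip \<beta> k \<in> H")
    case True
    have "\<bar>edge_weight lam v \<beta> k\<bar> \<le> (if \<beta> ! k then L else V)"
      unfolding L_def V_def by (rule edge_weight_abs_le[OF that])
    with True have "\<bar>edge_weight lam v \<beta> k\<bar> * \<bar>z (flip \<beta> k)\<bar> \<le> (if \<beta> ! k then L else V) * m"
      using le_m by (intro mult_mono) auto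
    with True that show ?thesis by (cases "\<beta> ! k") (simp_all add: U_def D_def abs_mult mult.commute)
  next
    case False
    with support \<open>\<beta> \<in> cube n\<close> show ?thesis by (simp add: U_def D_def)
  qed
  have "t * m = \<bar>signed_op n lam v z \<beta>\<bar>"
    using eigen \<open>\<beta> \<in> cube n\<close> \<open>\<bar>z \<beta>\<bar> = m\<close> \<open>t > 0\<close> by (simp add: abs_mult)
  also have "\<dots> \<le> (\<Sum>k<n. \<bar>edge_weight lam v \<beta> k * z (flip \<beta> k)\<bar>)"
    unfolding signed_op_def by (rule sum_abs)
  also have "\<dots> \<le> (\<Sum>k<n. m * (L * of_bool (k \<in> U) + V * of_bool (k \<in> D)))"
    by (rule sum_mono) (simp add: term_le)
  also have "\<dots> = m * (L * card U + V * card D)"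
  proof -
    have "{..<n} \<inter> U = U" "{..<n} \<inter> D = D" by (auto simp: U_def D_def)
    then show ?thesis by (simp add: sum.distrib flip: sum_distrib_left)
  qed
  finally have "t \<le> L * card U + V * card D"
    using \<open>m > 0\<close> by (simp add: mult.commute)
  then show ?thesis
    using \<open>\<beta> \<in> H\<close> len by (auto simp: L_def V_def U_def D_def card_up_neighbours card_down_neighbours)
qed

theorem mainTheorem2:
  fixes n :: nat and v lam :: "nat \<Rightarrow> real" and H :: "bool list set"
  assumes "n \<ge> 1"
    and "(\<Sum>i<n. lam i * v i) > 0"
    and "H \<subseteq> cube n"
    and "card H > 2 ^ (n - 1)"
  shows "\<exists>\<beta>\<in>H. sqrt (\<Sum>i<n. lam i * v i)
           \<le> sup_norm n lam * real (card {\<gamma>\<in>H. up_edge \<gamma> \<beta>})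
             + sup_norm n v * real (card {\<gamma>\<in>H. up_edge \<beta> \<gamma>})"
proof -
  define t where "t = sqrt (\<Sum>i<n. lam i * v i)"
  have "t > 0" "t * t = (\<Sum>i<n. lam i * v i)"
    using assms(2) by (simp_all add: t_def)
  have "\<exists>j<n. lam j \<noteq> 0"
  proof (rule ccontr)
    assume "\<not> (\<exists>j<n. lam j \<noteq> 0)"
    then have "(\<Sum>i<n. lam i * v i) = 0" by simp
    with assms(2) show False by simp
  qed
  then obtain j where "j < n" "lam j \<noteq> 0" by blast
  from exists_signed_op_eigenvector_supported_on[OF this \<open>t * t = _\<close> assms(3,4)]
  obtain z where "\<forall>b\<in>cube n. signed_op n lam v z b = t * z b" "\<forall>b\<in>cube n - H. z b = 0"
    "\<exists>b\<in>H. z b \<noteq> 0"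
    by blast
  from eigenvector_degree_bound[OF assms(3) \<open>t > 0\<close> this] show ?thesis
    by (simp add: t_def)
qed

end
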